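(* Let $\lambda(z)=\sum_{i\ge 2}\lambda_i z^{i-1}$ be a polynomial with $\lambda_i\ge 0$ and $\sum_i\lambda_i=1$, and let $j=1/\int_0^1\lambda(z)\,dz$. Let $\bar\alpha_j$ be the largest $\alpha\ge 0$ such that $\lambda\!\left(1-e^{-\alpha j x}\right)\le x$ for all $x\in(0,1]$. For an integer $k\ge 2$ and $\alpha>0$ with $\alpha j\le k-1$, set $\delta=\alpha j/(k-1)$ and define the density-evolution sequence $x_0=1$, $x_{i+1}=\delta\,\lambda\!\left(1-(1-x_i)^{k-1}\right)$ for $i\ge 0$. (a) If $\alpha>\bar\alpha_j$, then for every integer $k\ge 2$ with $\alpha j\le k-1$, the sequence $(x_i)$ does not converge to $0$. (b) If $0<\alpha<\bar\alpha_j$, then there exists $K<\infty$ such that for all integers $k\ge K$ the sequence $(x_i)$ converges to $0$.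
   Context: This is the density-evolution (DE) recursion for iterative erasure decoding on the binary erasure channel with erasure probability $\delta$ of a check-regular LDPC ensemble with variable-node edge degree distribution $\lambda$ and all check nodes of degree $k$; convergence of $x_i$ to $0$ corresponds to decoding success with high probability as the block length tends to infinity, and non-convergence to failure. *)

theory Defs
  imports "HOL-Analysis.Analysis"
begin

definition lam_poly :: "(nat \<Rightarrow> real) \<Rightarrow> nat \<Rightarrow> real \<Rightarrow> real" where
  "lam_poly lam D z = (\<Sum>i\<in>{2..D}. lam i * z ^ (i - 1))"

definition degree_dist :: "(nat \<Rightarrow> real) \<Rightarrow> nat \<Rightarrow> bool" where
  "degree_dist lam D \<longleftrightarrow> (\<forall>i. 0 \<le> lam i) \<and> lam 0 = 0 \<and> lam 1 = 0 \<and>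
     (\<forall>i>D. lam i = 0) \<and> (\<Sum>i\<in>{2..D}. lam i) = 1"

definition jval :: "(nat \<Rightarrow> real) \<Rightarrow> nat \<Rightarrow> real" where
  "jval lam D = 1 / integral {0..1} (lam_poly lam D)"

definition alpha_bar :: "(nat \<Rightarrow> real) \<Rightarrow> nat \<Rightarrow> real" where
  "alpha_bar lam D = (GREATEST a. 0 \<le> a \<and>
     (\<forall>x\<in>{0<..1}. lam_poly lam D (1 - exp (- a * jval lam D * x)) \<le> x))"

primrec DE :: "(nat \<Rightarrow> real) \<Rightarrow> nat \<Rightarrow> real \<Rightarrow> nat \<Rightarrow> nat \<Rightarrow> real" where
  "DE lam D delta k 0 = 1"
| "DE lam D delta k (Suc i) = delta * lam_poly lam D (1 - (1 - DE lam D delta k i) ^ (k - 1))"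

end

theory Submission
  imports Defs
begin

(* Write P for the edge-degree polynomial lambda, j = 1 / integral_0^1 P and
   d = alpha j/(k-1).  The density-evolution sequence is the orbit of 1 under the
   map  f(x) = d * P(1 - (1-x)^(k-1)),  a continuous monotone self-map of [0,1].

   1. P is continuous, nonnegative, strictly increasing on [0,inf) with P 1 = 1;
      hence j > 0.
   2. The set of admissible alpha is closed, bounded and contains 0, so
      alpha_bar is its maximum (the GREATEST element exists).
   3. For a monotone continuous self-map f of [0,1] the orbit of 1 decreases;
      it stays above every y with y <= f y, and it tends to 0 when f x < x on
      (0, f 1].
   4. (a) If alpha > alpha_bar some x0 violates the admissibility inequality;
      by (1-y)^n <= exp(-n y) the point y = d x0 satisfies y <= f y, so the
      orbit stays above y > 0.
      (b) If alpha < beta < alpha_bar, the bound (1-x)^n >= exp(-n x/(1-x))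
      shows f x < x on (0,d] as soon as d <= 1 - alpha/beta, i.e. for all
      large k. *)

lemma degree_dist_nonneg: "degree_dist lam D \<Longrightarrow> 0 \<le> lam i"
  unfolding degree_dist_def by auto

lemma degree_dist_positive_coeff:
  assumes "degree_dist lam D"
  obtains i0 where "i0 \<in> {2..D}" "lam i0 > 0"
proof -
  have "(\<Sum>i\<in>{2..D}. lam i) = 1"
    using assms unfolding degree_dist_def by auto
  then obtain i0 where "i0 \<in> {2..D}" "lam i0 \<noteq> 0"
    by (metis (mono_tags, lifting) sum.neutral zero_neq_one)
  with degree_dist_nonneg[OF assms, of i0] that show ?thesis by simp
qed

lemma lam_poly_0: "lam_poly lam D 0 = 0"
  unfolding lam_poly_def by (auto intro!: sum.neutral)

lemma lam_poly_1: "degree_dist lam D \<Longrightarrow> lam_poly lam D 1 = 1"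
  unfolding lam_poly_def degree_dist_def by auto

lemma lam_poly_nonneg: "degree_dist lam D \<Longrightarrow> 0 \<le> x \<Longrightarrow> 0 \<le> lam_poly lam D x"
  unfolding lam_poly_def by (auto intro!: sum_nonneg simp: degree_dist_nonneg)

lemma lam_poly_mono:
  "degree_dist lam D \<Longrightarrow> 0 \<le> x \<Longrightarrow> x \<le> y \<Longrightarrow> lam_poly lam D x \<le> lam_poly lam D y"
  unfolding lam_poly_def
  by (auto intro!: sum_mono mult_left_mono power_mono simp: degree_dist_nonneg)

text \<open>Strict monotonicity, needed to turn \<open>\<beta> < \<alpha>_bar\<close> into a strict inequality
  in part (b).\<close>
lemma lam_poly_strict_mono:
  assumes dd: "degree_dist lam D" and "0 \<le> x" "x < y"
  shows "lam_poly lam D x < lam_poly lam D y"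
  unfolding lam_poly_def
proof (rule sum_strict_mono_ex1)
  obtain i0 where i0: "i0 \<in> {2..D}" "lam i0 > 0"
    using degree_dist_positive_coeff[OF dd] by blast
  show "finite {2..D}" by simp
  show "\<forall>i\<in>{2..D}. lam i * x ^ (i - 1) \<le> lam i * y ^ (i - 1)"
    using assms by (auto intro!: mult_left_mono power_mono simp: degree_dist_nonneg)
  have "x ^ (i0 - 1) < y ^ (i0 - 1)"
    using i0 assms by (intro power_strict_mono) auto
  then show "\<exists>i\<in>{2..D}. lam i * x ^ (i - 1) < lam i * y ^ (i - 1)"
    using i0 by (intro bexI[of _ i0]) auto
qed

lemma isCont_lam_poly: "isCont (lam_poly lam D) x"
  unfolding lam_poly_def by (intro continuous_intros)

lemma jval_pos:
  assumes dd: "degree_dist lam D"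
  shows "jval lam D > 0"
proof -
  obtain i0 where i0: "i0 \<in> {2..D}" "lam i0 > 0"
    using degree_dist_positive_coeff[OF dd] by blast
  define G where "G z = (\<Sum>i\<in>{2..D}. lam i * z ^ i / real i)" for z :: real
  have "(lam_poly lam D has_integral (G 1 - G 0)) {0..1}"
  proof (rule fundamental_theorem_of_calculus)
    fix x :: real
    have "(G has_real_derivative (\<Sum>i\<in>{2..D}. lam i * (real i * x ^ (i - 1)) / real i))
            (at x within {0..1})"
      unfolding G_def by (intro derivative_eq_intros) auto
    moreover have "(\<Sum>i\<in>{2..D}. lam i * (real i * x ^ (i - 1)) / real i) = lam_poly lam D x"
      unfolding lam_poly_def by (intro sum.cong) auto
    ultimately show "(G has_vector_derivative lam_poly lam D x) (at x within {0..1})"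
      by (simp add: has_real_derivative_iff_has_vector_derivative)
  qed simp
  then have "integral {0..1} (lam_poly lam D) = G 1 - G 0" by blast
  moreover have "G 0 = 0" unfolding G_def by (auto intro!: sum.neutral)
  moreover have "G 1 > 0"
    unfolding G_def using i0 degree_dist_nonneg[OF dd] by (intro sum_pos2[of _ i0]) auto
  ultimately show ?thesis unfolding jval_def by simp
qed

section \<open>The threshold \<open>\<alpha>_bar\<close>\<close>

definition admissible :: "(nat \<Rightarrow> real) \<Rightarrow> nat \<Rightarrow> real set" where
  "admissible lam D =
     {a. 0 \<le> a \<and> (\<forall>x\<in>{0<..1}. lam_poly lam D (1 - exp (- a * jval lam D * x)) \<le> x)}"

text \<open>Large \<open>a\<close> are not admissible: at \<open>x = 1/2\<close> the left side tends to \<open>P 1 = 1\<close>.\<close>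
lemma admissible_bdd_above:
  assumes dd: "degree_dist lam D"
  shows "bdd_above (admissible lam D)"
proof -
  define j where "j = jval lam D"
  have "j > 0" using jval_pos[OF dd] j_def by simp
  then have "filterlim (\<lambda>a::real. - a * j * (1/2)) at_bot at_top" by real_asymp
  then have "((\<lambda>a. exp (- a * j * (1/2))) \<longlongrightarrow> 0) at_top"
    by (rule filterlim_compose[OF exp_at_bot])
  then have "((\<lambda>a. lam_poly lam D (1 - exp (- a * j * (1/2)))) \<longlongrightarrow> lam_poly lam D (1 - 0)) at_top"
    by (intro isCont_tendsto_compose[OF isCont_lam_poly] tendsto_intros)
  then have "((\<lambda>a. lam_poly lam D (1 - exp (- a * j * (1/2)))) \<longlongrightarrow> 1) at_top"
    using lam_poly_1[OF dd] by simp
  then have "eventually (\<lambda>a. lam_poly lam D (1 - exp (- a * j * (1/2))) > 1/2) at_top"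
    by (rule order_tendstoD) simp
  then obtain B where B: "\<And>a. a \<ge> B \<Longrightarrow> lam_poly lam D (1 - exp (- a * j * (1/2))) > 1/2"
    by (auto simp: eventually_at_top_linorder)
  have "a \<le> B" if "a \<in> admissible lam D" for a
    using that B[of a] unfolding admissible_def j_def by (force dest: bspec[of _ _ "1/2"])
  then show ?thesis unfolding bdd_above_def by blast
qed

lemma admissible_closed: "closed (admissible lam D)"
proof -
  have "admissible lam D = {a. 0 \<le> a} \<inter>
          (\<Inter>x\<in>{0<..1}. {a. lam_poly lam D (1 - exp (- a * jval lam D * x)) \<le> x})"
    unfolding admissible_def by auto
  moreover have "closed {a. lam_poly lam D (1 - exp (- a * jval lam D * x)) \<le> x}" for x
    unfolding lam_poly_def by (intro closed_Collect_le continuous_intros)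
  moreover have "closed {a::real. 0 \<le> a}"
    by (intro closed_Collect_le continuous_intros)
  ultimately show ?thesis by (simp add: closed_INT closed_Int)
qed

lemma zero_admissible: "0 \<in> admissible lam D"
  unfolding admissible_def by (auto simp: lam_poly_0)

lemma alpha_bar_max:
  assumes dd: "degree_dist lam D"
  shows "alpha_bar lam D \<in> admissible lam D"
    and "\<And>a. a \<in> admissible lam D \<Longrightarrow> a \<le> alpha_bar lam D"
proof -
  let ?S = "admissible lam D"
  have sup_in: "Sup ?S \<in> ?S"
    using closed_contains_Sup[OF _ admissible_bdd_above[OF dd] admissible_closed]
      zero_admissible by blast
  have "alpha_bar lam D = Sup ?S"
    unfolding alpha_bar_def
  proof (rule Greatest_equality)
    show "0 \<le> Sup ?S \<and> (\<forall>x\<in>{0<..1}. lam_poly lam D (1 - exp (- Sup ?S * jval lam D * x)) \<le> x)"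
      using sup_in unfolding admissible_def by blast
  next
    fix y assume "0 \<le> y \<and> (\<forall>x\<in>{0<..1}. lam_poly lam D (1 - exp (- y * jval lam D * x)) \<le> x)"
    then show "y \<le> Sup ?S"
      using cSup_upper[OF _ admissible_bdd_above[OF dd]] unfolding admissible_def by blast
  qed
  then show "alpha_bar lam D \<in> ?S" "\<And>a. a \<in> ?S \<Longrightarrow> a \<le> alpha_bar lam D"
    using sup_in cSup_upper[OF _ admissible_bdd_above[OF dd]] by simp_all
qed

lemma below_threshold_strict:
  assumes dd: "degree_dist lam D" and "0 \<le> \<beta>" "\<beta> < alpha_bar lam D" and u: "0 < u" "u \<le> 1"
  shows "lam_poly lam D (1 - exp (- \<beta> * jval lam D * u)) < u"
proof -
  have j: "jval lam D > 0" using jval_pos[OF dd] .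
  have "\<beta> * jval lam D * u < alpha_bar lam D * jval lam D * u"
    using assms j by simp
  then have "lam_poly lam D (1 - exp (- \<beta> * jval lam D * u))
               < lam_poly lam D (1 - exp (- alpha_bar lam D * jval lam D * u))"
    using assms j by (intro lam_poly_strict_mono[OF dd]) auto
  also have "\<dots> \<le> u"
    using alpha_bar_max(1)[OF dd] u unfolding admissible_def by auto
  finally show ?thesis .
qed

section \<open>Orbits of monotone self-maps of the unit interval\<close>

locale unit_interval_monotone =
  fixes f :: "real \<Rightarrow> real"
  assumes maps_into: "\<And>x. 0 \<le> x \<Longrightarrow> x \<le> 1 \<Longrightarrow> 0 \<le> f x \<and> f x \<le> 1"
    and mono: "\<And>x y. 0 \<le> x \<Longrightarrow> x \<le> y \<Longrightarrow> y \<le> 1 \<Longrightarrow> f x \<le> f y"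
begin

lemma orbit_decreasing:
  "0 \<le> (f ^^ i) 1 \<and> (f ^^ i) 1 \<le> 1 \<and> (f ^^ Suc i) 1 \<le> (f ^^ i) 1"
proof (induction i)
  case 0
  then show ?case using maps_into[of 1] by simp
next
  case (Suc i)
  then show ?case using maps_into[of "(f ^^ i) 1"] mono[of "(f ^^ Suc i) 1" "(f ^^ i) 1"] by auto
qed

lemma orbit_above_subfixed:
  assumes "0 \<le> y" "y \<le> 1" "y \<le> f y"
  shows "y \<le> (f ^^ i) 1"
proof (induction i)
  case (Suc i)
  have "f y \<le> f ((f ^^ i) 1)"
    using assms Suc orbit_decreasing[of i] by (intro mono) auto
  with assms(3) show ?case by simp
qed (use assms in simp)

text \<open>If \<open>f\<close> has no fixed point in \<open>(0, f 1]\<close> (lying strictly below the diagonal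
  there), the orbit converges to \<open>0\<close>: its limit is such a fixed point.\<close>
lemma orbit_tendsto_zero:
  assumes cont: "continuous_on {0..1} f"
    and below: "\<And>x. 0 < x \<Longrightarrow> x \<le> f 1 \<Longrightarrow> f x < x"
  shows "(\<lambda>i. (f ^^ i) 1) \<longlonglongrightarrow> 0"
proof -
  let ?X = "\<lambda>i. (f ^^ i) 1"
  have "decseq ?X" using orbit_decreasing by (intro decseq_SucI) blast
  then obtain L where L: "?X \<longlonglongrightarrow> L" "\<forall>i. L \<le> ?X i"
    using orbit_decreasing by (metis decseq_convergent)
  have L_range: "0 \<le> L" "L \<le> 1"
    using LIMSEQ_le_const[OF L(1), of 0] orbit_decreasing L(2)[rule_format, of 0] by auto
  have "L \<le> f 1" using L(2)[rule_format, of 1] by simp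
  have "(\<lambda>i. f (?X i)) \<longlonglongrightarrow> f L"
    using orbit_decreasing L_range
    by (intro continuous_on_tendsto_compose[OF cont L(1)]) auto
  moreover have "(\<lambda>i. f (?X i)) \<longlonglongrightarrow> L"
    using LIMSEQ_Suc[OF L(1)] by simp
  ultimately have "f L = L" using LIMSEQ_unique by blast
  with below[of L] \<open>L \<le> f 1\<close> L_range L(1) show ?thesis by force
qed

end

definition de_step :: "(nat \<Rightarrow> real) \<Rightarrow> nat \<Rightarrow> real \<Rightarrow> nat \<Rightarrow> real \<Rightarrow> real" where
  "de_step lam D d k x = d * lam_poly lam D (1 - (1 - x) ^ (k - 1))"

lemma DE_eq_orbit: "DE lam D d k i = (de_step lam D d k ^^ i) 1"
  by (induction i) (simp_all add: de_step_def)

lemma de_step_monotone: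
  assumes dd: "degree_dist lam D" and "0 \<le> d" "d \<le> 1"
  shows "unit_interval_monotone (de_step lam D d k)"
proof
  fix x :: real assume x: "0 \<le> x" "x \<le> 1"
  have p: "0 \<le> (1 - x) ^ (k - 1)" "(1 - x) ^ (k - 1) \<le> 1"
    using x by (auto intro: power_le_one)
  then have "0 \<le> lam_poly lam D (1 - (1 - x) ^ (k - 1))"
    and "lam_poly lam D (1 - (1 - x) ^ (k - 1)) \<le> 1"
    using lam_poly_mono[OF dd, of "1 - (1 - x) ^ (k - 1)" 1] lam_poly_1[OF dd]
    by (auto intro: lam_poly_nonneg[OF dd])
  then show "0 \<le> de_step lam D d k x \<and> de_step lam D d k x \<le> 1"
    using assms unfolding de_step_def by (auto intro: mult_le_one)
next
  fix x y :: real assume xy: "0 \<le> x" "x \<le> y" "y \<le> 1"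
  have "(1 - y) ^ (k - 1) \<le> (1 - x) ^ (k - 1)" "(1 - x) ^ (k - 1) \<le> 1"
    using xy by (auto intro: power_mono power_le_one)
  then show "de_step lam D d k x \<le> de_step lam D d k y"
    unfolding de_step_def using assms by (intro mult_left_mono lam_poly_mono) auto
qed

lemma de_step_continuous: "continuous_on {0..1} (de_step lam D d k)"
  unfolding de_step_def
  by (intro continuous_at_imp_continuous_on ballI continuous_intros
        continuous_at_compose[OF _ isCont_lam_poly, unfolded o_def])

lemma de_step_1: "degree_dist lam D \<Longrightarrow> 2 \<le> k \<Longrightarrow> de_step lam D d k 1 = d"
  unfolding de_step_def by (simp add: lam_poly_1 power_0_left)

text \<open>Two-sided comparison of \<open>(1-t)^n\<close> with exponentials, from
  \<open>1 - t \<le> exp(-t)\<close> and \<open>ln (1/(1-t)) \<le> t/(1-t)\<close>.\<close>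
lemma one_minus_pow_le_exp:
  fixes t :: real
  assumes "t \<le> 1"
  shows "(1 - t) ^ n \<le> exp (- real n * t)"
proof -
  have "(1 - t) ^ n \<le> exp (- t) ^ n"
    using assms exp_minus_ge[of t] by (intro power_mono) auto
  also have "\<dots> = exp (- real n * t)" by (simp add: exp_of_nat_mult[symmetric])
  finally show ?thesis .
qed

lemma exp_le_one_minus_pow:
  fixes t :: real
  assumes "0 \<le> t" "t < 1"
  shows "exp (- (real n * t / (1 - t))) \<le> (1 - t) ^ n"
proof -
  have "ln (1 / (1 - t)) \<le> 1 / (1 - t) - 1" using assms by (intro ln_le_minus_one) auto
  then have "- ln (1 - t) \<le> t / (1 - t)" using assms by (simp add: ln_div field_simps)
  then have "- (real n * t / (1 - t)) \<le> real n * ln (1 - t)"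
    using mult_left_mono[of "- ln (1 - t)" "t / (1 - t)" "real n"] by (simp add: algebra_simps)
  then have "exp (- (real n * t / (1 - t))) \<le> exp (real n * ln (1 - t))" by simp
  also have "\<dots> = (1 - t) ^ n" using assms by (simp add: exp_of_nat_mult)
  finally show ?thesis .
qed

section \<open>Part (a): above the threshold decoding fails\<close>

lemma DE_not_tendsto_zero_above_threshold:
  assumes dd: "degree_dist lam D" and above: "\<alpha> > alpha_bar lam D"
    and k: "2 \<le> k" "\<alpha> * jval lam D \<le> real k - 1"
  shows "\<not> (DE lam D (\<alpha> * jval lam D / (real k - 1)) k \<longlonglongrightarrow> 0)"
proof
  define j where "j = jval lam D"
  define d where "d = \<alpha> * j / (real k - 1)"
  assume "DE lam D (\<alpha> * jval lam D / (real k - 1)) k \<longlonglongrightarrow> 0"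
  then have lim: "(\<lambda>i. (de_step lam D d k ^^ i) 1) \<longlonglongrightarrow> 0"
    unfolding DE_eq_orbit d_def j_def .
  have j: "j > 0" using jval_pos[OF dd] j_def by simp
  have "\<alpha> > 0"
    using above alpha_bar_max(1)[OF dd] unfolding admissible_def by simp
  then have d: "0 < d" "d \<le> 1" "real (k - 1) * d = \<alpha> * j"
    using k j unfolding d_def j_def by (auto simp: of_nat_diff)
  obtain x0 where x0: "0 < x0" "x0 \<le> 1" "x0 < lam_poly lam D (1 - exp (- \<alpha> * j * x0))"
    using alpha_bar_max(2)[OF dd, of \<alpha>] above \<open>\<alpha> > 0\<close>
    unfolding admissible_def j_def by force
  define y where "y = d * x0"
  have y: "0 < y" "y \<le> 1" using d x0 unfolding y_def by (auto intro: mult_le_one)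
  have "(1 - y) ^ (k - 1) \<le> exp (- \<alpha> * j * x0)"
    using one_minus_pow_le_exp[of y "k - 1"] y d(3) unfolding y_def
    by (simp add: mult.assoc[symmetric])
  moreover have "exp (- \<alpha> * j * x0) \<le> 1"
    using x0 \<open>\<alpha> > 0\<close> j by simp
  ultimately have "lam_poly lam D (1 - exp (- \<alpha> * j * x0)) \<le> lam_poly lam D (1 - (1 - y) ^ (k - 1))"
    by (intro lam_poly_mono[OF dd]) auto
  with x0 have "x0 < lam_poly lam D (1 - (1 - y) ^ (k - 1))" by simp
  then have "y \<le> de_step lam D d k y"
    unfolding y_def de_step_def using d by simp
  then have "\<And>i. y \<le> (de_step lam D d k ^^ i) 1"
    using y unit_interval_monotone.orbit_above_subfixed[OF de_step_monotone[OF dd]] d by simp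
  then have "y \<le> 0" by (intro LIMSEQ_le_const[OF lim]) auto
  with y show False by simp
qed

section \<open>Part (b): below the threshold decoding succeeds for large \<open>k\<close>\<close>

lemma de_step_below_diagonal:
  assumes dd: "degree_dist lam D" and \<alpha>\<beta>: "0 < \<alpha>" "\<alpha> < \<beta>" "\<beta> < alpha_bar lam D"
    and d: "0 < d" "real (k - 1) * d = \<alpha> * jval lam D" "d \<le> 1 - \<alpha> / \<beta>"
    and x: "0 < x" "x \<le> d"
  shows "de_step lam D d k x < x"
proof -
  define u where "u = x / d"
  have u: "0 < u" "u \<le> 1" "x = d * u" using x d unfolding u_def by auto
  have "\<alpha> / \<beta> \<le> 1 - x" "0 < \<alpha> / \<beta>" using x d \<alpha>\<beta> by auto
  then have x1: "x < 1" by linarith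
  have "real (k - 1) * x / (1 - x) \<le> real (k - 1) * x / (\<alpha> / \<beta>)"
    using \<open>\<alpha> / \<beta> \<le> 1 - x\<close> \<open>0 < \<alpha> / \<beta>\<close> x by (intro divide_left_mono mult_pos_pos) auto
  also have "\<dots> = \<beta> * jval lam D * u"
    using d(2) \<alpha>\<beta> unfolding u(3) by (simp add: field_simps)
  finally have "exp (- \<beta> * jval lam D * u) \<le> exp (- (real (k - 1) * x / (1 - x)))"
    by simp
  also have "\<dots> \<le> (1 - x) ^ (k - 1)"
    using exp_le_one_minus_pow x x1 by simp
  finally have "exp (- \<beta> * jval lam D * u) \<le> (1 - x) ^ (k - 1)" .
  moreover have "(1 - x) ^ (k - 1) \<le> 1" using x x1 by (intro power_le_one) auto
  ultimately have "lam_poly lam D (1 - (1 - x) ^ (k - 1))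
                     \<le> lam_poly lam D (1 - exp (- \<beta> * jval lam D * u))"
    by (intro lam_poly_mono[OF dd]) auto
  also have "\<dots> < u" using below_threshold_strict[OF dd _ \<alpha>\<beta>(3) u(1,2)] \<alpha>\<beta> by simp
  finally show ?thesis unfolding de_step_def using d u by simp
qed

lemma DE_tendsto_zero_below_threshold:
  assumes dd: "degree_dist lam D" and \<alpha>: "0 < \<alpha>" "\<alpha> < alpha_bar lam D"
  shows "\<exists>K::nat. \<forall>k\<ge>K. 2 \<le> k \<and> \<alpha> * jval lam D \<le> real k - 1 \<longrightarrow>
           (DE lam D (\<alpha> * jval lam D / (real k - 1)) k \<longlonglongrightarrow> 0)"
proof (intro exI allI impI)
  define j where "j = jval lam D"
  define \<beta> where "\<beta> = (\<alpha> + alpha_bar lam D) / 2"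
  define c where "c = 1 - \<alpha> / \<beta>"
  have \<beta>: "\<alpha> < \<beta>" "\<beta> < alpha_bar lam D" and "0 < c"
    using \<alpha> unfolding \<beta>_def c_def by (auto simp: field_simps)
  fix k :: nat
  assume "nat \<lceil>\<alpha> * j / c\<rceil> + 2 \<le> k" and k: "2 \<le> k \<and> \<alpha> * jval lam D \<le> real k - 1"
  define d where "d = \<alpha> * j / (real k - 1)"
  have "\<alpha> * j / c \<le> real k - 1" using \<open>nat \<lceil>\<alpha> * j / c\<rceil> + 2 \<le> k\<close> by linarith
  then have d: "0 < d" "d \<le> 1" "real (k - 1) * d = \<alpha> * j" "d \<le> c"
    using k \<alpha> jval_pos[OF dd] \<open>0 < c\<close> unfolding d_def j_def
    by (auto simp: of_nat_diff field_simps)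
  interpret unit_interval_monotone "de_step lam D d k"
    using de_step_monotone[OF dd] d by simp
  have "(\<lambda>i. (de_step lam D d k ^^ i) 1) \<longlonglongrightarrow> 0"
  proof (rule orbit_tendsto_zero[OF de_step_continuous])
    fix x assume "0 < x" "x \<le> de_step lam D d k 1"
    then show "de_step lam D d k x < x"
      using de_step_below_diagonal[OF dd \<alpha>(1) \<beta>, of d k x] de_step_1[OF dd, of k d] d k
      unfolding c_def j_def by auto
  qed
  then show "DE lam D (\<alpha> * jval lam D / (real k - 1)) k \<longlonglongrightarrow> 0"
    unfolding DE_eq_orbit d_def j_def .
qed

theorem theorem1:
  fixes lam :: "nat \<Rightarrow> real" and D :: nat
  assumes "degree_dist lam D"
  shows "(\<forall>\<alpha>::real. \<alpha> > alpha_bar lam D \<longrightarrow>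
            (\<forall>k::nat. 2 \<le> k \<and> \<alpha> * jval lam D \<le> real k - 1 \<longrightarrow>
               \<not> (DE lam D (\<alpha> * jval lam D / (real k - 1)) k \<longlonglongrightarrow> 0)))
       \<and> (\<forall>\<alpha>::real. 0 < \<alpha> \<and> \<alpha> < alpha_bar lam D \<longrightarrow>
            (\<exists>K::nat. \<forall>k\<ge>K. 2 \<le> k \<and> \<alpha> * jval lam D \<le> real k - 1 \<longrightarrow>
               (DE lam D (\<alpha> * jval lam D / (real k - 1)) k \<longlonglongrightarrow> 0)))"
  using DE_not_tendsto_zero_above_threshold[OF assms]
    DE_tendsto_zero_below_threshold[OF assms] by blast

end
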